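(* Let $p,q\geq 2$ be relatively prime integers and $x,y,z,w,a\in A_{pq}$. If $f_{p,q}(x,a,y)=f_{p,q}(z,a,w)$, then $x\equiv z\pmod q$.
   Context: For an integer $n>1$, $A_n=\{0,1,\dots,n-1\}$. Define $g_{p,q}:A_{pq}\times A_{pq}\to A_{pq}$ by writing $x=x_1q+x_0$, $y=y_1q+y_0$ with $x_0,y_0\in A_q$, $x_1,y_1\in A_p$ (uniquely), and setting $g_{p,q}(x,y)=x_0p+y_1$. Define $f_{p,q}:A_{pq}^3\to A_{pq}$ by $f_{p,q}(x,a,y)=g_{p,q}(g_{p,q}(x,a),g_{p,q}(a,y))$. *)

theory Defs
  imports Main "HOL-Number_Theory.Cong"
begin

text \<open>A_n = {0..<n}. For x, y in A_(pq), writing x = x1*q + x0 with x0 in A_q, x1 in A_p,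
  g_(p,q)(x,y) = x0*p + y1, i.e. (x mod q)*p + y div q.\<close>

definition A :: "nat \<Rightarrow> nat set" where
  "A n = {0..<n}"

definition g :: "nat \<Rightarrow> nat \<Rightarrow> nat \<Rightarrow> nat \<Rightarrow> nat" where
  "g p q x y = (x mod q) * p + y div q"

definition f :: "nat \<Rightarrow> nat \<Rightarrow> nat \<Rightarrow> nat \<Rightarrow> nat \<Rightarrow> nat" where
  "f p q x a y = g p q (g p q x a) (g p q a y)"

end

theory Submission
  imports Defs
begin

text \<open>The high digit of g(u, v) in base p is the low digit u mod q of u, so the outer g in
  f(x, a, y) exposes g(x, a) mod q = ((x mod q) p + a div q) mod q; as p is invertible modulo q,
  this determines x mod q.\<close>

lemma g_div_p:
  assumes "0 < p" and "v < p * q"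
  shows "g p q u v div p = u mod q"
proof -
  have "v div q < p"
    using assms by (simp add: less_mult_imp_div_less mult.commute)
  then show ?thesis
    using assms(1) by (simp add: g_def)
qed

lemma g_less:
  assumes "0 < q" and "v < p * q"
  shows "g p q u v < p * q"
proof -
  have "v div q < p"
    using assms by (simp add: less_mult_imp_div_less mult.commute)
  moreover have "(u mod q) * p \<le> (q - 1) * p"
    using assms(1) by (intro mult_le_mono1) (simp add: less_Suc_eq_le[symmetric])
  moreover have "(q - 1) * p + p = p * q"
    using assms(1) by (simp add: algebra_simps)
  ultimately show ?thesis
    unfolding g_def by linarith
qed

lemma cong_mod_of_g_mod:
  assumes "coprime p q" and "g p q x a mod q = g p q z a mod q"
  shows "[x = z] (mod q)"
proof -
  have "[(x mod q) * p + a div q = (z mod q) * p + a div q] (mod q)"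
    using assms(2) unfolding g_def cong_def .
  then have "[(x mod q) * p = (z mod q) * p] (mod q)"
    by (simp add: cong_add_rcancel_nat)
  then have "[x mod q = z mod q] (mod q)"
    using assms(1) by (metis cong_mult_rcancel_nat coprime_commute)
  then show ?thesis
    by (simp add: cong_def)
qed

theorem lemma4:
  fixes p q x y z w a :: nat
  assumes "p \<ge> 2" and "q \<ge> 2" and "coprime p q"
    and "x \<in> A (p*q)" and "y \<in> A (p*q)" and "z \<in> A (p*q)"
    and "w \<in> A (p*q)" and "a \<in> A (p*q)"
    and "f p q x a y = f p q z a w"
  shows "[x = z] (mod q)"
proof -
  have "g p q a y < p * q" and "g p q a w < p * q"
    using assms(2,5,7,8) g_less[of q _ p a] by (simp_all add: A_def)
  then have "g p q x a mod q = g p q z a mod q"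
    using assms(1,9) g_div_p[of p "g p q a y" q "g p q x a"] g_div_p[of p "g p q a w" q "g p q z a"]
    by (simp add: f_def)
  then show ?thesis
    using assms(3) cong_mod_of_g_mod by blast
qed

end
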